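(* Let $A$ be a vector space with bilinear operations $\star,[-,-]$, and $x\cdot y=x\star y+y\star x$. (1) If $(A,\cdot,[-,-])$ is a transposed Poisson algebra, $(A,\star)$ is anti-Zinbiel, and $(-\mathcal{L}_{\star},\mathrm{ad},A)$ is a representation of the transposed Poisson algebra $(A,\cdot,[-,-])$, then $(A,\star,[-,-])$ is a TALO algebra, i.e. $x\star[y,z]=[x,y]\star z=[x,y\star z]=0$ for all $x,y,z$. (2) Conversely, if $(A,\star,[-,-])$ is a TALO algebra, then $(A,\cdot,[-,-])$ is a transposed Poisson algebra with representation $(-\mathcal{L}_{\star},\mathrm{ad},A)$.
   Context: Finite-dimensional spaces, characteristic zero. $\mathcal{L}_\star(x)y=x\star y$, $\mathrm{ad}(x)y=[x,y]$. Anti-Zinbiel: $x\star(y\star z)=-(x\star y+y\star x)\star z=x\star(z\star y)$. Transposed Poisson algebra: $(A,\cdot)$ commutative associative, $(A,[-,-])$ Lie, $2z\cdot[x,y]=[z\cdot x,y]+[x,z\cdot y]$. A representation of a transposed Poisson algebra is $(\mu,\rho,V)$ with $\mu(x\cdot y)=\mu(x)\mu(y)$, $\rho([x,y])=[\rho(x),\rho(y)]$, $2\mu(x)\rho(y)=\rho(x\cdot y)+\rho(y)\mu(x)$, $2\mu([x,y])=\rho(x)\mu(y)-\rho(y)\mu(x)$. A TALO algebra is $(A,\star,[-,-])$ with $(A,\star)$ anti-Zinbiel, $(A,[-,-])$ Lie, and $x\star[y,z]=[x,y]\star z=[x,y\star z]=0$ for all $x,y,z$. *)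

theory Defs
  imports Complex_Main
begin

text \<open>A is the carrier type 'a, a vector space over a field 'k of characteristic zero
  with scalar multiplication scale. All definitions are relative to this scalar multiplication.\<close>

definition bilinear_op :: "('k::field \<Rightarrow> 'a::ab_group_add \<Rightarrow> 'a) \<Rightarrow> ('a \<Rightarrow> 'a \<Rightarrow> 'a) \<Rightarrow> bool" where
  "bilinear_op scale m \<longleftrightarrow>
     (\<forall>y. Vector_Spaces.linear scale scale (\<lambda>x. m x y)) \<and>
     (\<forall>x. Vector_Spaces.linear scale scale (\<lambda>y. m x y))"

definition fin_dim :: "('k::field \<Rightarrow> 'a::ab_group_add \<Rightarrow> 'a) \<Rightarrow> bool" where
  "fin_dim scale \<longleftrightarrow> (\<exists>B. finite B \<and> module.span scale B = UNIV)"

definition anti_zinbiel :: "('a::ab_group_add \<Rightarrow> 'a \<Rightarrow> 'a) \<Rightarrow> bool" where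
  "anti_zinbiel st \<longleftrightarrow> (\<forall>x y z.
      st x (st y z) = - st (st x y + st y x) z \<and> st x (st y z) = st x (st z y))"

definition lie_alg :: "('k::field \<Rightarrow> 'a::ab_group_add \<Rightarrow> 'a) \<Rightarrow> ('a \<Rightarrow> 'a \<Rightarrow> 'a) \<Rightarrow> bool" where
  "lie_alg scale br \<longleftrightarrow> bilinear_op scale br \<and> (\<forall>x. br x x = 0) \<and>
     (\<forall>x y z. br x (br y z) + br y (br z x) + br z (br x y) = 0)"

definition comm_assoc_alg :: "('k::field \<Rightarrow> 'a::ab_group_add \<Rightarrow> 'a) \<Rightarrow> ('a \<Rightarrow> 'a \<Rightarrow> 'a) \<Rightarrow> bool" where
  "comm_assoc_alg scale m \<longleftrightarrow> bilinear_op scale m \<and> (\<forall>x y. m x y = m y x) \<and>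
     (\<forall>x y z. m (m x y) z = m x (m y z))"

definition transposed_poisson :: "('k::field \<Rightarrow> 'a::ab_group_add \<Rightarrow> 'a) \<Rightarrow> ('a \<Rightarrow> 'a \<Rightarrow> 'a) \<Rightarrow> ('a \<Rightarrow> 'a \<Rightarrow> 'a) \<Rightarrow> bool" where
  "transposed_poisson scale dot br \<longleftrightarrow> comm_assoc_alg scale dot \<and> lie_alg scale br \<and>
     (\<forall>x y z. scale 2 (dot z (br x y)) = br (dot z x) y + br x (dot z y))"

definition tp_representation ::
  "('k::field \<Rightarrow> 'a::ab_group_add \<Rightarrow> 'a) \<Rightarrow> ('k \<Rightarrow> 'v::ab_group_add \<Rightarrow> 'v) \<Rightarrow>
   ('a \<Rightarrow> 'a \<Rightarrow> 'a) \<Rightarrow> ('a \<Rightarrow> 'a \<Rightarrow> 'a) \<Rightarrow> ('a \<Rightarrow> 'v \<Rightarrow> 'v) \<Rightarrow> ('a \<Rightarrow> 'v \<Rightarrow> 'v) \<Rightarrow> bool" where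
  "tp_representation scaleA scaleV dot br mu rho \<longleftrightarrow>
     (\<forall>x. Vector_Spaces.linear scaleV scaleV (mu x)) \<and>
     (\<forall>x. Vector_Spaces.linear scaleV scaleV (rho x)) \<and>
     (\<forall>v. Vector_Spaces.linear scaleA scaleV (\<lambda>x. mu x v)) \<and>
     (\<forall>v. Vector_Spaces.linear scaleA scaleV (\<lambda>x. rho x v)) \<and>
     (\<forall>x y. mu (dot x y) = mu x \<circ> mu y) \<and>
     (\<forall>x y. rho (br x y) = (\<lambda>v. rho x (rho y v) - rho y (rho x v))) \<and>
     (\<forall>x y v. scaleV 2 (mu x (rho y v)) = rho (dot x y) v + rho y (mu x v)) \<and>
     (\<forall>x y v. scaleV 2 (mu (br x y) v) = rho x (mu y v) - rho y (mu x v))"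

definition TALO :: "('k::field \<Rightarrow> 'a::ab_group_add \<Rightarrow> 'a) \<Rightarrow> ('a \<Rightarrow> 'a \<Rightarrow> 'a) \<Rightarrow> ('a \<Rightarrow> 'a \<Rightarrow> 'a) \<Rightarrow> bool" where
  "TALO scale st br \<longleftrightarrow> anti_zinbiel st \<and> lie_alg scale br \<and>
     (\<forall>x y z. st x (br y z) = 0 \<and> st (br x y) z = 0 \<and> br x (st y z) = 0)"

end

theory Submission
  imports Defs
begin

text \<open>
  For (1), evaluate the transposed Poisson identity for \<open>z \<cdot> [x, y]\<close> once directly and once
  through the two representation identities computing \<open>z \<star> [x, y]\<close> and \<open>[x, y] \<star> z\<close>.
  Comparing the results gives \<open>2 [x, z \<star> y] + [x, y \<star> z] = 0\<close>; together with the same relation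
  for \<open>y, z\<close> swapped this forces \<open>3 [x, z \<star> y] = 0\<close>.  Once \<open>[x, y \<star> z]\<close> vanishes, the representation
  identities say that \<open>2 (x \<star> [y, z])\<close> and \<open>2 ([x, y] \<star> z)\<close> vanish as well.
  For (2), all mixed products vanish, so the only content left is that an anti-Zinbiel product
  symmetrises to a commutative associative one, \<open>-\<L>\<^sub>\<star>\<close> is multiplicative, and \<open>ad\<close> is a Lie
  algebra homomorphism.
\<close>

lemma bilinear_op_module_hom:
  assumes "bilinear_op scale m"
  shows "module_hom scale scale (\<lambda>x. m x y)" "module_hom scale scale (m x)"
  using assms by (simp_all add: bilinear_op_def module_hom_iff_linear)

lemma
  assumes "bilinear_op scale m"
  shows bilinear_op_add_left: "m (x + y) z = m x z + m y z"
    and bilinear_op_add_right: "m x (y + z) = m x y + m x z"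
    and bilinear_op_minus_left: "m (- x) z = - m x z"
    and bilinear_op_minus_right: "m x (- z) = - m x z"
    and bilinear_op_zero_left: "m 0 z = 0"
    and bilinear_op_zero_right: "m x 0 = 0"
  using module_hom.add[OF bilinear_op_module_hom(1)[OF assms]]
    module_hom.add[OF bilinear_op_module_hom(2)[OF assms]]
    module_hom.neg[OF bilinear_op_module_hom(1)[OF assms]]
    module_hom.neg[OF bilinear_op_module_hom(2)[OF assms]]
    module_hom.zero[OF bilinear_op_module_hom(1)[OF assms]]
    module_hom.zero[OF bilinear_op_module_hom(2)[OF assms]]
  by simp_all

lemmas bilinear_op_simps = bilinear_op_add_left bilinear_op_add_right
  bilinear_op_minus_left bilinear_op_minus_right bilinear_op_zero_left bilinear_op_zero_right

lemma vector_space_scale_two: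
  fixes scale :: "'k::field \<Rightarrow> 'a::ab_group_add \<Rightarrow> 'a"
  assumes "vector_space scale"
  shows "scale 2 x = x + x"
proof -
  interpret vector_space scale by fact
  show ?thesis using scale_left_distrib[of 1 1 x] by (simp add: one_add_one)
qed

lemma
  fixes scale :: "'k::field_char_0 \<Rightarrow> 'a::ab_group_add \<Rightarrow> 'a" and x :: 'a
  assumes "vector_space scale"
  shows vector_space_double_eq_0_iff: "x + x = 0 \<longleftrightarrow> x = 0"
    and vector_space_triple_eq_0_iff: "x + x + x = 0 \<longleftrightarrow> x = 0"
proof -
  interpret vector_space scale by fact
  have "scale 3 x = scale 2 x + scale 1 x"
    using scale_left_distrib[of 2 1 x] by simp
  then show "x + x = 0 \<longleftrightarrow> x = 0" "x + x + x = 0 \<longleftrightarrow> x = 0"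
    using scale_eq_0_iff[of 2 x] scale_eq_0_iff[of 3 x] vector_space_scale_two[OF assms, of x]
    by simp_all
qed

lemma lie_alg_antisym:
  assumes "lie_alg scale br"
  shows "br x y = - br y x"
proof -
  have bil: "bilinear_op scale br" and alt: "\<And>x. br x x = 0"
    using assms unfolding lie_alg_def by auto
  have "br x y + br y x = br (x + y) (x + y) - br x x - br y y"
    by (simp add: bilinear_op_simps[OF bil])
  then show ?thesis by (simp add: alt eq_neg_iff_add_eq_0)
qed

lemma lie_alg_bracket_bracket_left:
  assumes "lie_alg scale br"
  shows "br (br x y) z = br x (br y z) - br y (br x z)"
proof -
  have bil: "bilinear_op scale br" using assms unfolding lie_alg_def by auto
  have "br x (br y z) + br y (br z x) + br z (br x y) = 0"
    using assms unfolding lie_alg_def by auto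
  then show ?thesis
    using lie_alg_antisym[OF assms, of z "br x y"] lie_alg_antisym[OF assms, of z x]
    by (simp add: bilinear_op_simps[OF bil] algebra_simps)
qed

lemma anti_zinbiel_sym_left:
  "anti_zinbiel st \<Longrightarrow> st (st x y + st y x) z = - st x (st y z)"
  unfolding anti_zinbiel_def by simp

lemma anti_zinbiel_right_comm:
  "anti_zinbiel st \<Longrightarrow> st x (st y z) = st x (st z y)"
  unfolding anti_zinbiel_def by blast

lemma anti_zinbiel_left_comm:
  assumes "anti_zinbiel st"
  shows "st x (st y z) = st y (st x z)"
  using anti_zinbiel_sym_left[OF assms, of x y z] anti_zinbiel_sym_left[OF assms, of y x z]
  by (simp add: add.commute)

text \<open>The triple product \<open>x \<star> (y \<star> z)\<close> is totally symmetric.\<close>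

lemma anti_zinbiel_sym_sym_eq_triple:
  assumes "anti_zinbiel st" and "bilinear_op scale st"
  defines "dot \<equiv> \<lambda>x y. st x y + st y x"
  shows "dot (dot x y) z = st x (st y z)"
proof -
  have zxy: "st z (st x y) = st x (st y z)"
    using anti_zinbiel_left_comm[OF assms(1), of z x y] anti_zinbiel_right_comm[OF assms(1), of x z y]
    by simp
  moreover have "st z (st y x) = st x (st y z)"
    using anti_zinbiel_right_comm[OF assms(1), of z y x] zxy by simp
  ultimately show ?thesis
    using anti_zinbiel_sym_left[OF assms(1), of x y z]
    by (simp add: dot_def bilinear_op_simps[OF assms(2)])
qed

lemma bilinear_op_sym:
  assumes "vector_space scale" and "bilinear_op scale st"
  shows "bilinear_op scale (\<lambda>x y. st x y + st y x)"
proof -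
  interpret vector_space scale by fact
  interpret module_pair scale scale ..
  show ?thesis
    using assms(2) unfolding bilinear_op_def linear_iff_module_hom
    by (simp add: module_hom_add)
qed

lemma comm_assoc_alg_anti_zinbiel_sym:
  assumes "vector_space scale" and "anti_zinbiel st" and "bilinear_op scale st"
  shows "comm_assoc_alg scale (\<lambda>x y. st x y + st y x)"
proof -
  let ?dot = "\<lambda>x y. st x y + st y x"
  have "?dot (?dot x y) z = ?dot x (?dot y z)" for x y z
  proof -
    have "?dot x (?dot y z) = ?dot (?dot y z) x" by (simp add: add.commute)
    also have "\<dots> = st y (st z x)" by (rule anti_zinbiel_sym_sym_eq_triple[OF assms(2,3)])
    also have "\<dots> = st x (st y z)"
      using anti_zinbiel_right_comm[OF assms(2), of y z x] anti_zinbiel_left_comm[OF assms(2), of y x z]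
      by simp
    finally show ?thesis by (simp add: anti_zinbiel_sym_sym_eq_triple[OF assms(2,3)])
  qed
  then show ?thesis
    using bilinear_op_sym[OF assms(1,3)] by (simp add: comm_assoc_alg_def add.commute)
qed

context
  fixes scale :: "'k::field_char_0 \<Rightarrow> 'a::ab_group_add \<Rightarrow> 'a" and st br :: "'a \<Rightarrow> 'a \<Rightarrow> 'a"
  assumes vs: "vector_space scale"
    and st_bilinear: "bilinear_op scale st"
    and tp: "transposed_poisson scale (\<lambda>x y. st x y + st y x) br"
    and rep: "tp_representation scale scale (\<lambda>x y. st x y + st y x) br (\<lambda>x v. - st x v) br"
begin

private lemma br_lie: "lie_alg scale br"
  using tp unfolding transposed_poisson_def by simp

private lemmas br_bilinear = br_lie[unfolded lie_alg_def, THEN conjunct1]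
  and br_antisym = lie_alg_antisym[OF br_lie]

private lemma neg_left_mult_ad:
  "- st x (br y v) - st x (br y v) = br (st x y + st y x) v - br y (st x v)"
proof -
  have "scale 2 (- st x (br y v)) = br (st x y + st y x) v + br y (- st x v)"
    using rep unfolding tp_representation_def by blast
  then show ?thesis
    by (simp add: vector_space_scale_two[OF vs] bilinear_op_simps[OF br_bilinear])
qed

private lemma neg_left_mult_bracket:
  "- st (br x y) v - st (br x y) v = br y (st x v) - br x (st y v)"
proof -
  have "scale 2 (- st (br x y) v) = br x (- st y v) - br y (- st x v)"
    using rep unfolding tp_representation_def by blast
  then show ?thesis
    by (simp add: vector_space_scale_two[OF vs] bilinear_op_simps[OF br_bilinear])
qed

lemma bracket_star_right_relation:
  "br x (st z y) + br x (st z y) + br x (st y z) = 0"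
proof -
  let ?p = "st z (br x y)" and ?q = "st (br x y) z"
  let ?a1 = "br (st z x) y" and ?a2 = "br (st x z) y"
  let ?b1 = "br x (st z y)" and ?b2 = "br x (st y z)"
  have p: "?p + ?p = ?a1 - ?b1 - ?b2"
    using neg_left_mult_ad[of z y x] br_antisym[of y x] br_antisym[of y "st z x"]
      br_antisym[of "st z y" x] br_antisym[of "st y z" x]
    by (simp add: bilinear_op_simps[OF st_bilinear] bilinear_op_simps[OF br_bilinear] algebra_simps)
  have q: "?q + ?q = ?b2 + ?a2"
    using neg_left_mult_bracket[of x y z] br_antisym[of y "st x z"] by (simp add: algebra_simps)
  have "(?p + ?q) + (?p + ?q) = ?a1 + ?a2 + (?b1 + ?b2)"
    using tp unfolding transposed_poisson_def
    by (simp add: vector_space_scale_two[OF vs] bilinear_op_simps[OF br_bilinear] algebra_simps)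
  then show ?thesis using p q by (simp add: algebra_simps)
qed

lemma bracket_star_right_eq_0: "br x (st y z) = 0"
proof -
  have "br x (st y z) + br x (st y z) + br x (st y z)
      = (br x (st y z) + br x (st y z) + br x (st z y)) + (br x (st y z) + br x (st y z) + br x (st z y))
        - (br x (st z y) + br x (st z y) + br x (st y z))"
    by (simp add: algebra_simps)
  also have "\<dots> = 0"
    by (simp only: bracket_star_right_relation diff_self add_0_right)
  finally show ?thesis by (simp only: vector_space_triple_eq_0_iff[OF vs])
qed

lemma star_bracket_left_eq_0: "st (br x y) z = 0"
  using neg_left_mult_bracket[of x y z]
  by (simp add: bracket_star_right_eq_0 vector_space_double_eq_0_iff[OF vs, of "- st (br x y) z", simplified])

lemma star_bracket_right_eq_0: "st x (br y z) = 0"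
proof -
  have "br (st x y) z = 0" for x y
    using br_antisym[of "st x y" z] by (simp add: bracket_star_right_eq_0)
  then show ?thesis
    using neg_left_mult_ad[of x y z]
    by (simp add: bracket_star_right_eq_0 bilinear_op_simps[OF br_bilinear]
        vector_space_double_eq_0_iff[OF vs, of "- st x (br y z)", simplified])
qed

lemma TALO_of_tp_representation: "anti_zinbiel st \<Longrightarrow> TALO scale st br"
  unfolding TALO_def
  by (simp add: br_lie star_bracket_left_eq_0 star_bracket_right_eq_0 bracket_star_right_eq_0)

end

lemma TALO_mixed_products:
  assumes "TALO scale st br"
  shows "st x (br y z) = 0" "st (br x y) z = 0" "br x (st y z) = 0" "br (st x y) z = 0"
proof -
  have "lie_alg scale br" and "\<And>x y z. st x (br y z) = 0 \<and> st (br x y) z = 0 \<and> br x (st y z) = 0"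
    using assms unfolding TALO_def by auto
  then show "st x (br y z) = 0" "st (br x y) z = 0" "br x (st y z) = 0" "br (st x y) z = 0"
    using lie_alg_antisym[of scale br "st x y" z] by simp_all
qed

lemma transposed_poisson_of_TALO:
  assumes "vector_space scale" and "bilinear_op scale st" and "TALO scale st br"
  shows "transposed_poisson scale (\<lambda>x y. st x y + st y x) br"
proof -
  interpret vector_space scale by fact
  have "anti_zinbiel st" and lie: "lie_alg scale br" using assms(3) unfolding TALO_def by auto
  then have "comm_assoc_alg scale (\<lambda>x y. st x y + st y x)" and "bilinear_op scale br"
    using comm_assoc_alg_anti_zinbiel_sym[OF assms(1) _ assms(2)] unfolding lie_alg_def by auto
  with lie show ?thesis
    unfolding transposed_poisson_def
    by (simp add: TALO_mixed_products[OF assms(3)] bilinear_op_simps)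
qed

lemma tp_representation_of_TALO:
  assumes "vector_space scale" and "bilinear_op scale st" and "TALO scale st br"
  shows "tp_representation scale scale (\<lambda>x y. st x y + st y x) br (\<lambda>x v. - st x v) br"
proof -
  interpret vector_space scale by fact
  interpret module_pair scale scale ..
  have az: "anti_zinbiel st" and lie: "lie_alg scale br" using assms(3) unfolding TALO_def by auto
  then have "bilinear_op scale br" unfolding lie_alg_def by simp
  have "Vector_Spaces.linear scale scale (\<lambda>v. - st x v)"
    and "Vector_Spaces.linear scale scale (\<lambda>x. - st x v)"
    and "Vector_Spaces.linear scale scale (br x)"
    and "Vector_Spaces.linear scale scale (\<lambda>x. br x v)" for x v
    using assms(2) \<open>bilinear_op scale br\<close> unfolding bilinear_op_def linear_iff_module_hom
    by (simp_all add: module_hom_neg)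
  have "(\<lambda>v. - st (st x y + st y x) v) = (\<lambda>v. - st x v) \<circ> (\<lambda>v. - st y v)" for x y
    by (simp add: fun_eq_iff anti_zinbiel_sym_left[OF az] bilinear_op_minus_right[OF assms(2)])
  have "br (br x y) = (\<lambda>v. br x (br y v) - br y (br x v))" for x y
    by (simp add: fun_eq_iff lie_alg_bracket_bracket_left[OF lie])
  have "scale 2 (- st x (br y v)) = br (st x y + st y x) v + br y (- st x v)"
    and "scale 2 (- st (br x y) v) = br x (- st y v) - br y (- st x v)" for x y v
    using TALO_mixed_products[OF assms(3)] bilinear_op_add_left[OF \<open>bilinear_op scale br\<close>]
      bilinear_op_minus_right[OF \<open>bilinear_op scale br\<close>]
    by simp_all
  show ?thesis
    unfolding tp_representation_def by (intro conjI allI; fact)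
qed

theorem mainTheorem13:
  fixes scale :: "'k::field_char_0 \<Rightarrow> 'a::ab_group_add \<Rightarrow> 'a"
    and st br :: "'a \<Rightarrow> 'a \<Rightarrow> 'a"
  assumes "vector_space scale"
    and "fin_dim scale"
    and "bilinear_op scale st"
    and "bilinear_op scale br"
  defines "dot \<equiv> (\<lambda>x y. st x y + st y x)"
  shows "(transposed_poisson scale dot br \<and> anti_zinbiel st \<and>
          tp_representation scale scale dot br (\<lambda>x v. - st x v) br
          \<longrightarrow> TALO scale st br)
       \<and> (TALO scale st br \<longrightarrow>
          transposed_poisson scale dot br \<and>
          tp_representation scale scale dot br (\<lambda>x v. - st x v) br)"
  using TALO_of_tp_representation[OF assms(1,3)]
    transposed_poisson_of_TALO[OF assms(1,3)] tp_representation_of_TALO[OF assms(1,3)]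
  unfolding dot_def by blast

end
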